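(* Let $d\geq 2$ and let $\mathcal{CP}$ be a $d$-dimensional cube packing with $2^d-\delta$ cubes, with representatives $x^1,\dots,x^{2^d-\delta}\in\{0,1,2,3\}^d$. Then for every coordinate $i\in\{1,\dots,d\}$ and every $j\in\{0,1,2,3\}$, the induced cube packing on layer $j$ along coordinate $i$ has at least $2^{d-1}-\delta$ cubes; that is, the number of indices $k$ with $x^k_i\in\{j, j+1 \bmod 4\}$ is at least $2^{d-1}-\delta$.
   Context: A $d$-dimensional cube packing is a $4\mathbb{Z}^d$-invariant set of pairwise disjoint translates $z+[0,2[^d$, $z\in\mathbb{Z}^d$; it is described by the set of representatives $x\in\{0,1,2,3\}^d$ of the $4\mathbb{Z}^d$-orbits of its cubes, two cubes with representatives $x,x'$ being disjoint iff $|x_i-x'_i|=2$ for some coordinate $i$. Its number of cubes is the number of orbits. Given a coordinate $i$ and $j\in\{0,1,2,3\}$, the induced cube packing on layer $j$ is the $(d-1)$-dimensional cube packing with representatives $(x^k_1,\dots,x^k_{i-1},x^k_{i+1},\dots,x^k_d)$ for all representatives $x^k$ with $x^k_i\equiv j$ or $j+1 \pmod 4$. *)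

theory Defs
  imports Main
begin

text \<open>A d-dimensional cube packing, given by its set S of representatives
  x in {0,1,2,3}^d (lists of length d, coordinates indexed 0..d-1) of the
  4Z^d-orbits of its cubes; distinct cubes must be disjoint, i.e. differ by 2 in
  some coordinate.\<close>
definition cube_packing :: "nat \<Rightarrow> nat list set \<Rightarrow> bool" where
  "cube_packing d S \<longleftrightarrow>
     (\<forall>x\<in>S. length x = d \<and> (\<forall>i<d. x ! i < 4)) \<and>
     (\<forall>x\<in>S. \<forall>y\<in>S. x \<noteq> y \<longrightarrow> (\<exists>i<d. \<bar>int (x ! i) - int (y ! i)\<bar> = 2))"

definition layer_reps :: "nat list set \<Rightarrow> nat \<Rightarrow> nat \<Rightarrow> nat list set" where
  "layer_reps S i j = {x \<in> S. x ! i = j mod 4 \<or> x ! i = (j + 1) mod 4}"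

end

theory Submission
  imports Defs "HOL-Library.FuncSet"
begin

text \<open>Coordinates differing by 2 modulo 4 are told apart by the single bit
  "v \<in> {1,2}", so a family of representatives that is pairwise separated in the
  coordinates K injects into K \<rightarrow> bool and has at most 2^|K| members. Inside a
  layer along coordinate i all i-th coordinates lie in {j, j+1} mod 4, which never
  differ by 2, so the cubes of a layer are separated in the remaining d-1
  coordinates and a layer has at most 2^(d-1) cubes. Layers j and j+2 partition the
  packing, hence layer j has at least 2^d - \<delta> - 2^(d-1) = 2^(d-1) - \<delta> cubes.\<close>

lemma residue_cases_mod4:
  fixes j :: nat
  obtains "j mod 4 = 0" | "j mod 4 = 1" | "j mod 4 = 2" | "j mod 4 = 3"
proof -
  have "j mod 4 < 4" by simp
  then show thesis using that by linarith
qed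

lemma consecutive_residues_mod4_not_opposite:
  fixes j :: nat
  shows "\<bar>int (j mod 4) - int ((j + 1) mod 4)\<bar> \<noteq> 2"
  by (cases j rule: residue_cases_mod4) (simp_all only: mod_add_left_eq[symmetric, of j], simp_all)

lemma layer_residues_complementary:
  fixes v j :: nat
  assumes "v < 4"
  shows "(v = j mod 4 \<or> v = (j + 1) mod 4) \<longleftrightarrow> \<not> (v = (j + 2) mod 4 \<or> v = (j + 3) mod 4)"
  using assms
  by (cases j rule: residue_cases_mod4) (simp_all only: mod_add_left_eq[symmetric, of j], simp_all, arith+)

lemma opposite_residues_mod4_middle_bit:
  fixes a b :: nat
  assumes "a < 4" "b < 4" "\<bar>int a - int b\<bar> = 2"
  shows "a \<in> {1, 2} \<longleftrightarrow> b \<notin> {1, 2}"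
  using assms by auto

lemma separated_reps_card_le:
  fixes S :: "nat list set" and K :: "nat set"
  assumes K: "finite K"
    and bounded: "\<And>x k. x \<in> S \<Longrightarrow> k \<in> K \<Longrightarrow> x ! k < 4"
    and separated: "\<And>x y. x \<in> S \<Longrightarrow> y \<in> S \<Longrightarrow> x \<noteq> y \<Longrightarrow> \<exists>k\<in>K. \<bar>int (x ! k) - int (y ! k)\<bar> = 2"
  shows "finite S \<and> card S \<le> 2 ^ card K"
proof -
  define code where "code x = restrict (\<lambda>k. x ! k \<in> {1, 2}) K" for x :: "nat list"
  have "inj_on code S"
  proof (rule inj_onI)
    fix x y assume x: "x \<in> S" and y: "y \<in> S" and same: "code x = code y"
    show "x = y"
    proof (rule ccontr)
      assume "x \<noteq> y"
      then obtain k where k: "k \<in> K" "\<bar>int (x ! k) - int (y ! k)\<bar> = 2"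
        using separated x y by blast
      have "(x ! k \<in> {1, 2}) = (y ! k \<in> {1, 2})"
        using fun_cong[OF same, of k] k(1) by (simp add: code_def)
      with opposite_residues_mod4_middle_bit[OF bounded[OF x k(1)] bounded[OF y k(1)] k(2)]
      show False by blast
    qed
  qed
  moreover have "code ` S \<subseteq> K \<rightarrow>\<^sub>E (UNIV :: bool set)"
    by (auto simp: code_def)
  moreover have "finite (K \<rightarrow>\<^sub>E (UNIV :: bool set))"
    using K by (simp add: finite_PiE)
  ultimately have "finite S" "card S \<le> card (K \<rightarrow>\<^sub>E (UNIV :: bool set))"
    by (metis finite_imageD finite_subset, metis card_inj_on_le)
  moreover have "card (K \<rightarrow>\<^sub>E (UNIV :: bool set)) = 2 ^ card K"
    using K by (simp add: card_PiE)
  ultimately show ?thesis by simp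
qed

lemma layer_reps_card_le:
  assumes packing: "cube_packing d S" and i: "i < d"
  shows "finite (layer_reps S i j) \<and> card (layer_reps S i j) \<le> 2 ^ (d - 1)"
proof -
  let ?K = "{..<d} - {i}"
  have "finite (layer_reps S i j) \<and> card (layer_reps S i j) \<le> 2 ^ card ?K"
  proof (rule separated_reps_card_le)
    show "x ! k < 4" if "x \<in> layer_reps S i j" "k \<in> ?K" for x k
      using that packing by (auto simp: cube_packing_def layer_reps_def)
    show "\<exists>k\<in>?K. \<bar>int (x ! k) - int (y ! k)\<bar> = 2"
      if x: "x \<in> layer_reps S i j" and y: "y \<in> layer_reps S i j" and "x \<noteq> y" for x y
    proof -
      have "x \<in> S" "y \<in> S"
        using x y by (simp_all add: layer_reps_def)
      then obtain k where k: "k < d" "\<bar>int (x ! k) - int (y ! k)\<bar> = 2"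
        using packing \<open>x \<noteq> y\<close> unfolding cube_packing_def by blast
      have "x ! i \<in> {j mod 4, (j + 1) mod 4}" "y ! i \<in> {j mod 4, (j + 1) mod 4}"
        using x y by (auto simp: layer_reps_def)
      then have "\<bar>int (x ! i) - int (y ! i)\<bar> \<noteq> 2"
        using consecutive_residues_mod4_not_opposite[of j] by (auto simp: abs_minus_commute)
      with k have "k \<noteq> i" by auto
      with k show ?thesis by auto
    qed
  qed simp
  moreover have "card ?K = d - 1"
    using i by simp
  ultimately show ?thesis by simp
qed

lemma layer_reps_opposite_partition:
  assumes packing: "cube_packing d S" and i: "i < d"
  shows "layer_reps S i j \<union> layer_reps S i (j + 2) = S"
    and "layer_reps S i j \<inter> layer_reps S i (j + 2) = {}"
proof -
  have "x \<in> layer_reps S i j \<longleftrightarrow> x \<notin> layer_reps S i (j + 2)" if "x \<in> S" for x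
  proof -
    have "x ! i < 4"
      using that packing i by (simp add: cube_packing_def)
    from layer_residues_complementary[OF this, of j] that show ?thesis
      by (simp add: layer_reps_def add.commute)
  qed
  moreover have "layer_reps S i j \<subseteq> S" "layer_reps S i (j + 2) \<subseteq> S"
    by (simp_all add: layer_reps_def)
  ultimately show "layer_reps S i j \<union> layer_reps S i (j + 2) = S"
    and "layer_reps S i j \<inter> layer_reps S i (j + 2) = {}"
    by blast+
qed

theorem lemma3:
  fixes d :: nat and S :: "nat list set" and \<delta> :: int
  assumes "d \<ge> 2"
    and "cube_packing d S"
    and "int (card S) = 2 ^ d - \<delta>"
  shows "\<forall>i<d. \<forall>j<4. int (card (layer_reps S i j)) \<ge> 2 ^ (d - 1) - \<delta>"
proof (intro allI impI)
  fix i j :: nat assume i: "i < d"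
  let ?A = "layer_reps S i j" and ?B = "layer_reps S i (j + 2)"
  note partition = layer_reps_opposite_partition[OF assms(2) i, of j]
  note bounds = layer_reps_card_le[OF assms(2) i]
  have "card S = card (?A \<union> ?B)"
    using partition(1) by simp
  also have "\<dots> = card ?A + card ?B"
    using bounds partition(2) by (simp add: card_Un_disjoint)
  finally have "int (card S) = int (card ?A) + int (card ?B)"
    by simp
  moreover have "int (card ?B) \<le> 2 ^ (d - 1)"
    using bounds[of "j + 2"] by (simp add: of_nat_le_iff[symmetric])
  moreover have "(2::int) ^ d = 2 * 2 ^ (d - 1)"
    using i by (simp add: power_eq_if)
  ultimately show "int (card ?A) \<ge> 2 ^ (d - 1) - \<delta>"
    using assms(3) by linarith
qed

end
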